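(* Let $d\ge 1$ and let $D_d=\langle x,y\mid y^2=1,\ x^d=1,\ y^{-1}xy=x^{-1}\rangle$ be the dihedral group of order $2d$. Let $I=\{0,1,\dots,\lfloor d/2\rfloor\}$; for $a\in I$ let $r_a=1$ if $2a\equiv 0\pmod d$ and $r_a=2$ otherwise, and $s_a=2/r_a$. For an integer $c$ let $\bar c\in I$ be the element with $\bar c\equiv c$ or $\bar c\equiv -c \pmod d$, and put $r_c:=r_{\bar c}$, $s_c:=s_{\bar c}$, $S_{c,\gamma}:=S_{\bar c,\gamma}$. The irreducible characters of $D_d$ are $\theta_{a,\alpha}$ for $a\in I$, $0\le\alpha<s_a$, where, with $\omega=e^{2\pi i/d}$, $\theta_{a,\alpha}(y^jx^i)=(-1)^{j\alpha}\sum_{s\in\{a,-a\}\bmod d}\omega^{si}$ if $r_a\mid j$ and $0$ otherwise (the sum over the set of residues $\{a \bmod d,-a\bmod d\}$). A quasigroup $Q$ of order $2d$ is a balanced cover of the weighted character quasigroup of $D_d$ if and only if there exist pairwise disjoint subsets $S_{a,\alpha}\subseteq Q$ with $|S_{a,\alpha}|=r_a^2$, for $a\in I$ and $0\le\alpha<s_a$, such that for all $a,b\in I$, $0\le\alpha<s_a$, $0\le\beta<s_b$, $$S_{a,\alpha}\cdot S_{b,\beta}=r_a\gcd(r_a,r_b)\sum_{i=0}^{r_b-1}\ \sum_{\gamma}\frac{S_{a+b(-1)^i,\gamma}}{r_{a+b(-1)^i}},$$ where the inner sum runs over all $0\le\gamma<s_{a+b(-1)^i}$ with $\alpha+\beta-\gamma\equiv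 0\pmod{\gcd(s_a,s_b)}$.
   Context: For subsets $A,B$ of $Q$, $A\cdot B=\sum_{a\in A,b\in B}ab$ is the formal sum in the free module on $Q$ (recording multiplicities), and a subset is identified with the sum of its elements; the displayed equation is an equality of formal linear combinations of elements of $Q$ with rational coefficients. The scalar product of class functions is $\langle\theta\mid\varphi\rangle=\frac{1}{|G|}\sum_{g}\theta(g)\overline{\varphi(g)}$. The weighted character quasigroup of a finite group $G$ has underlying set the irreducible characters, weights $w(\theta)=\theta(1)^2$, and multiplication function $\alpha(\theta_i,\theta_j,\theta_k)=\theta_i(1)\theta_j(1)\theta_k(1)\langle\theta_i\theta_j\mid\theta_k\rangle$. A quasigroup $Q$ of order $|G|$ covers it if there is a surjection $f$ from $Q$ onto the irreducible characters with $|f^{-1}\{\theta\}|=\theta(1)^2$ and $|\{(a,b)\in f^{-1}\{\theta_i\}\times f^{-1}\{\theta_j\}: f(ab)=\theta_k\}|=\alpha(\theta_i,\theta_j,\theta_k)$ for all $i,j,k$; the cover is balanced if for all $i,j$ and all $q\in Q$ the number of pairs $(a,b)\in f^{-1}\{\theta_i\}\times f^{-1}\{\theta_j\}$ with $ab=q$ depends only on $f(q)$. *)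

theory Defs
  imports Complex_Main
begin

text \<open>Elements of D_d are written y^j x^i with j in {0,1}, i in {0..<d};
  we represent y^j x^i by the pair (j, i).  Using x y = y x^-1 one gets
  (y^j x^i)(y^k x^l) = y^(j+k) x^((-1)^k i + l).\<close>

definition dih_carrier :: "nat \<Rightarrow> (nat \<times> nat) set" where
  "dih_carrier d = {0, 1} \<times> {0..<d}"

definition dih_mult :: "nat \<Rightarrow> nat \<times> nat \<Rightarrow> nat \<times> nat \<Rightarrow> nat \<times> nat" where
  "dih_mult d g h = (case g of (j, i) \<Rightarrow> case h of (k, l) \<Rightarrow>
     ((j + k) mod 2, nat ((((-1::int) ^ k) * int i + int l) mod int d)))"

definition dih_one :: "nat \<times> nat" where
  "dih_one = (0, 0)"

definition idx :: "nat \<Rightarrow> nat set" where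
  "idx d = {0 .. d div 2}"

definition r_idx :: "nat \<Rightarrow> nat \<Rightarrow> nat" where
  "r_idx d a = (if (2 * a) mod d = 0 then 1 else 2)"

definition s_idx :: "nat \<Rightarrow> nat \<Rightarrow> nat" where
  "s_idx d a = 2 div r_idx d a"

definition bar :: "nat \<Rightarrow> int \<Rightarrow> nat" where
  "bar d c = (let m = nat (c mod int d) in if m \<le> d div 2 then m else d - m)"

definition omega :: "nat \<Rightarrow> complex" where
  "omega d = exp (2 * pi * \<i> / of_nat d)"

definition theta :: "nat \<Rightarrow> nat \<Rightarrow> nat \<Rightarrow> nat \<times> nat \<Rightarrow> complex" where
  "theta d a al g = (case g of (j, i) \<Rightarrow>
     if r_idx d a dvd j
     then (-1) ^ (j * al) *
          (\<Sum>s \<in> {nat (int a mod int d), nat ((- int a) mod int d)}. omega d ^ (s * i))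
     else 0)"

definition Irr :: "nat \<Rightarrow> (nat \<times> nat \<Rightarrow> complex) set" where
  "Irr d = {theta d a al | a al. a \<in> idx d \<and> al < s_idx d a}"

definition cf_inner :: "nat \<Rightarrow> (nat \<times> nat \<Rightarrow> complex) \<Rightarrow> (nat \<times> nat \<Rightarrow> complex) \<Rightarrow> complex" where
  "cf_inner d th ph = (\<Sum>g \<in> dih_carrier d. th g * cnj (ph g)) / of_nat (card (dih_carrier d))"

definition char_deg :: "(nat \<times> nat \<Rightarrow> complex) \<Rightarrow> complex" where
  "char_deg th = th dih_one"

definition wcq_weight :: "(nat \<times> nat \<Rightarrow> complex) \<Rightarrow> complex" where
  "wcq_weight th = char_deg th ^ 2"

definition wcq_mult :: "nat \<Rightarrow> (nat \<times> nat \<Rightarrow> complex) \<Rightarrow> (nat \<times> nat \<Rightarrow> complex)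
    \<Rightarrow> (nat \<times> nat \<Rightarrow> complex) \<Rightarrow> complex" where
  "wcq_mult d ti tj tk =
     char_deg ti * char_deg tj * char_deg tk * cf_inner d (\<lambda>g. ti g * tj g) tk"

definition quasigroup :: "'q set \<Rightarrow> ('q \<Rightarrow> 'q \<Rightarrow> 'q) \<Rightarrow> bool" where
  "quasigroup Q m \<longleftrightarrow> (\<forall>a\<in>Q. \<forall>b\<in>Q. m a b \<in> Q) \<and>
     (\<forall>a\<in>Q. bij_betw (m a) Q Q \<and> bij_betw (\<lambda>x. m x a) Q Q)"

definition is_cover :: "nat \<Rightarrow> 'q set \<Rightarrow> ('q \<Rightarrow> 'q \<Rightarrow> 'q) \<Rightarrow> ('q \<Rightarrow> (nat \<times> nat \<Rightarrow> complex)) \<Rightarrow> bool" where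
  "is_cover d Q m f \<longleftrightarrow>
     f ` Q = Irr d \<and>
     (\<forall>th \<in> Irr d. of_nat (card {q \<in> Q. f q = th}) = wcq_weight th) \<and>
     (\<forall>ti \<in> Irr d. \<forall>tj \<in> Irr d. \<forall>tk \<in> Irr d.
        of_nat (card {(a, b). a \<in> Q \<and> b \<in> Q \<and> f a = ti \<and> f b = tj \<and> f (m a b) = tk})
          = wcq_mult d ti tj tk)"

definition is_balanced :: "'q set \<Rightarrow> ('q \<Rightarrow> 'q \<Rightarrow> 'q) \<Rightarrow> ('q \<Rightarrow> (nat \<times> nat \<Rightarrow> complex)) \<Rightarrow> (nat \<times> nat \<Rightarrow> complex) set \<Rightarrow> bool" where
  "is_balanced Q m f Ir \<longleftrightarrow>
     (\<forall>ti \<in> Ir. \<forall>tj \<in> Ir. \<forall>q \<in> Q. \<forall>q' \<in> Q. f q = f q' \<longrightarrow>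
        card {(a, b). a \<in> Q \<and> b \<in> Q \<and> f a = ti \<and> f b = tj \<and> m a b = q}
      = card {(a, b). a \<in> Q \<and> b \<in> Q \<and> f a = ti \<and> f b = tj \<and> m a b = q'})"

definition balanced_cover_dihedral :: "nat \<Rightarrow> 'q set \<Rightarrow> ('q \<Rightarrow> 'q \<Rightarrow> 'q) \<Rightarrow> bool" where
  "balanced_cover_dihedral d Q m \<longleftrightarrow>
     (\<exists>f. is_cover d Q m f \<and> is_balanced Q m f (Irr d))"

text \<open>Coefficient of q in the formal sum A . B.\<close>
definition set_prod_coeff :: "('q \<Rightarrow> 'q \<Rightarrow> 'q) \<Rightarrow> 'q set \<Rightarrow> 'q set \<Rightarrow> 'q \<Rightarrow> nat" where
  "set_prod_coeff m A B q = card {(x, y). x \<in> A \<and> y \<in> B \<and> m x y = q}"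

definition rhs_coeff :: "nat \<Rightarrow> (nat \<Rightarrow> nat \<Rightarrow> 'q set) \<Rightarrow> nat \<Rightarrow> nat \<Rightarrow> nat \<Rightarrow> nat \<Rightarrow> 'q \<Rightarrow> rat" where
  "rhs_coeff d S a al b be q =
     of_nat (r_idx d a * gcd (r_idx d a) (r_idx d b)) *
     (\<Sum>i < r_idx d b.
        (let c = bar d (int a + int b * (-1) ^ i) in
          \<Sum>ga \<in> {ga. ga < s_idx d c \<and> (al + be) mod gcd (s_idx d a) (s_idx d b) = ga mod gcd (s_idx d a) (s_idx d b)}.
             (if q \<in> S c ga then 1 else 0) / of_nat (r_idx d c)))"

end

theory Submission
  imports Defs "HOL-Analysis.Complex_Transcendental"
begin

(* On a rotation x^i the character theta_{a,al} is the sum of omega^(s i) over the residues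
   s = +-a (mod d); on a reflection it is (-1)^al times that value for the linear characters
   (r_a = 1) and 0 otherwise.  Orthogonality of the d-th roots of unity therefore turns the
   multiplicity of theta_{c,ga} in theta_{a,al} theta_{b,be} into the number of solutions of
   +-a +-b = +-c (mod d), halved, with a parity correction in al + be + ga when all three
   characters are linear.  That number is r_a times the number of i < r_b with
   bar (a + (-1)^i b) = c, which puts the structure constants alpha in closed form.

   For a balanced cover f, let S_{a,al} be the fibre of theta_{a,al}.  Balance says that the
   coefficient of q in S_{a,al} S_{b,be} is constant on each fibre S_{c,ga}; the cover condition
   says that these coefficients sum to alpha over S_{c,ga}.  Together they pin the coefficient
   down to alpha / r_c^2, the displayed right-hand side.  Conversely, disjoint blocks of sizes
   r_a^2 exhaust Q because the squared degrees sum to 2d, so labelling every element by its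
   block gives a balanced cover. *)

section \<open>Roots of unity\<close>

lemma omega_pow: "omega d ^ k = exp (\<i> * complex_of_real (2 * pi * real k / real d))"
  unfolding omega_def by (simp add: exp_of_nat_mult[symmetric] field_simps)

lemma omega_pow_eq_1_iff:
  assumes "d \<ge> 1"
  shows "omega d ^ k = 1 \<longleftrightarrow> d dvd k"
proof
  assume "omega d ^ k = 1"
  then obtain n :: int where "2 * pi * real k / real d = of_int (2 * n) * pi"
    unfolding omega_pow exp_eq_1 by auto
  then have "real k = real d * of_int n" using assms by (simp add: field_simps)
  then have "int k = int d * n" by (metis of_int_eq_iff of_int_mult of_int_of_nat_eq)
  then show "d dvd k" by (metis dvd_triv_left int_dvd_int_iff)
next
  assume "d dvd k"
  then obtain n where "k = d * n" by auto
  moreover have "omega d ^ d = 1" using assms unfolding omega_pow by (simp add: exp_eq_1)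
  ultimately show "omega d ^ k = 1" by (simp add: power_mult)
qed

lemma sum_omega_pow:
  assumes "d \<ge> 1"
  shows "(\<Sum>i<d. omega d ^ (k * i)) = (if d dvd k then of_nat d else 0)"
proof (cases "d dvd k")
  case True
  then have "omega d ^ k = 1" using omega_pow_eq_1_iff[OF assms] by simp
  then show ?thesis using True by (simp add: power_mult)
next
  case False
  then have ne: "omega d ^ k \<noteq> 1" using omega_pow_eq_1_iff[OF assms] by simp
  have "(omega d ^ k) ^ d = 1"
    using omega_pow_eq_1_iff[OF assms, of "k * d"] by (simp add: power_mult)
  then have "(\<Sum>i<d. (omega d ^ k) ^ i) = 0"
    using geometric_sum[OF ne] by simp
  then show ?thesis using False by (simp add: power_mult)
qed

lemma cnj_omega_pow:
  assumes "d \<ge> 1"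
  shows "cnj (omega d ^ k) = omega d ^ (k * (d - 1))"
proof -
  have "cnj (omega d) * omega d = 1"
    unfolding omega_def exp_cnj by (simp add: exp_add[symmetric])
  moreover have "omega d ^ (d - 1) * omega d = 1"
    using omega_pow_eq_1_iff[OF assms, of d] assms by (simp flip: power_Suc2)
  moreover have "omega d \<noteq> 0" unfolding omega_def by simp
  ultimately have "cnj (omega d) = omega d ^ (d - 1)" by (metis mult_right_cancel)
  then show ?thesis by (metis complex_cnj_power power_mult mult.commute)
qed

section \<open>Products of irreducible characters\<close>

lemma r_idx_cases: "r_idx d a = 1 \<or> r_idx d a = 2"
  unfolding r_idx_def by auto

lemma r_idx_pos: "r_idx d a > 0"
  using r_idx_cases[of d a] by auto

lemma s_idx_eq: "s_idx d a = (if r_idx d a = 1 then 2 else 1)"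
  unfolding s_idx_def using r_idx_cases[of d a] by auto

lemma dvd_iff_dvd_of_dvd_diff:
  fixes k u v :: "'a::comm_ring_1"
  assumes "k dvd u - v"
  shows "k dvd u \<longleftrightarrow> k dvd v"
  using dvd_add_right_iff[OF assms, of v] by simp

definition pm_residues :: "nat \<Rightarrow> nat \<Rightarrow> nat set" where
  "pm_residues d a = {nat (int a mod int d), nat ((- int a) mod int d)}"

definition triple_count :: "nat \<Rightarrow> nat \<Rightarrow> nat \<Rightarrow> nat \<Rightarrow> nat" where
  "triple_count d a b c = (\<Sum>u\<in>pm_residues d c. \<Sum>t\<in>pm_residues d b. \<Sum>s\<in>pm_residues d a.
     if int d dvd int s + int t - int u then 1 else 0)"

lemma theta_rotation: "theta d a al (0, i) = (\<Sum>s\<in>pm_residues d a. omega d ^ (s * i))"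
  unfolding theta_def pm_residues_def by simp

lemma theta_reflection:
  "theta d a al (Suc 0, i) = (if r_idx d a = 1 then (-1) ^ al * theta d a al (0, i) else 0)"
  using r_idx_cases[of d a] unfolding theta_def by auto

lemma sum_rotations_theta_product:
  assumes d: "d \<ge> 1"
  shows "(\<Sum>i<d. theta d a al (0, i) * theta d b be (0, i) * cnj (theta d c ga (0, i)))
    = of_nat d * of_nat (triple_count d a b c)"
proof -
  have dvd_iff: "d dvd s + t + u * (d - 1) \<longleftrightarrow> int d dvd int s + int t - int u" for s t u
  proof -
    have "int (u * (d - 1)) = int u * int d - int u"
      using d by (simp add: of_nat_diff algebra_simps)
    then have "int (s + t + u * (d - 1)) = (int s + int t - int u) + int d * int u"
      by (simp add: algebra_simps)
    then show ?thesis by (metis dvd_add_times_triv_right_iff mult.commute int_dvd_int_iff)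
  qed
  have "theta d a al (0, i) * theta d b be (0, i) * cnj (theta d c ga (0, i))
     = (\<Sum>u\<in>pm_residues d c. \<Sum>t\<in>pm_residues d b. \<Sum>s\<in>pm_residues d a.
          omega d ^ ((s + t + u * (d - 1)) * i))" for i
  proof -
    have "cnj (theta d c ga (0, i)) = (\<Sum>u\<in>pm_residues d c. omega d ^ (u * (d - 1) * i))"
      unfolding theta_rotation using cnj_omega_pow[OF d] by (simp add: ac_simps)
    then show ?thesis unfolding theta_rotation
      by (simp add: sum_distrib_left sum_distrib_right power_add add_mult_distrib mult.assoc)
  qed
  then have "(\<Sum>i<d. theta d a al (0, i) * theta d b be (0, i) * cnj (theta d c ga (0, i)))
      = (\<Sum>u\<in>pm_residues d c. \<Sum>t\<in>pm_residues d b. \<Sum>s\<in>pm_residues d a.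
          \<Sum>i<d. omega d ^ ((s + t + u * (d - 1)) * i))"
    by (simp add: sum.swap[of _ "{..<d}"])
  also have "\<dots> = (\<Sum>u\<in>pm_residues d c. \<Sum>t\<in>pm_residues d b. \<Sum>s\<in>pm_residues d a.
      if int d dvd int s + int t - int u then of_nat d else 0)"
    using sum_omega_pow[OF d] dvd_iff by simp
  also have "\<dots> = of_nat d * of_nat (triple_count d a b c)"
    unfolding triple_count_def
    by (simp add: sum_distrib_left of_nat_sum if_distrib[of "\<lambda>x. of_nat d * x"]
        if_distrib[of of_nat] cong: if_cong)
  finally show ?thesis .
qed

lemma card_dih_carrier: "card (dih_carrier d) = 2 * d"
  unfolding dih_carrier_def by (simp add: card_cartesian_product)

lemma sum_dih_carrier:
  "(\<Sum>g\<in>dih_carrier d. F g) = (\<Sum>i<d. F (0, i)) + (\<Sum>i<d. F (Suc 0, i))"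
proof -
  have "(\<Sum>g\<in>dih_carrier d. F g) = (\<Sum>j\<in>{0, 1::nat}. \<Sum>i\<in>{0..<d}. F (j, i))"
    unfolding dih_carrier_def by (simp add: sum.cartesian_product)
  then show ?thesis by (simp add: atLeast0LessThan)
qed

lemma cf_inner_theta_product:
  assumes d: "d \<ge> 1"
  shows "cf_inner d (\<lambda>g. theta d a al g * theta d b be g) (theta d c ga)
    = of_nat (triple_count d a b c) *
      (1 + (if r_idx d a = 1 \<and> r_idx d b = 1 \<and> r_idx d c = 1 then (-1) ^ (al + be + ga) else 0)) / 2"
proof -
  let ?\<epsilon> = "if r_idx d a = 1 \<and> r_idx d b = 1 \<and> r_idx d c = 1 then (-1) ^ (al + be + ga) else 0 :: complex"
  have "theta d a al (Suc 0, i) * theta d b be (Suc 0, i) * cnj (theta d c ga (Suc 0, i))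
      = ?\<epsilon> * (theta d a al (0, i) * theta d b be (0, i) * cnj (theta d c ga (0, i)))" for i
    unfolding theta_reflection by (simp add: power_add)
  then have "(\<Sum>i<d. theta d a al (Suc 0, i) * theta d b be (Suc 0, i) * cnj (theta d c ga (Suc 0, i)))
      = ?\<epsilon> * (of_nat d * of_nat (triple_count d a b c))"
    by (simp add: sum_distrib_left[symmetric] sum_rotations_theta_product[OF d])
  then show ?thesis
    unfolding cf_inner_def card_dih_carrier sum_dih_carrier sum_rotations_theta_product[OF d]
    using d by (simp add: field_simps)
qed

definition signs :: "nat \<Rightarrow> nat \<Rightarrow> int set" where
  "signs d a = (if r_idx d a = 1 then {1} else {1, -1})"

definition pm_count :: "nat \<Rightarrow> nat \<Rightarrow> nat \<Rightarrow> nat \<Rightarrow> nat" where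
  "pm_count d a b c = (\<Sum>i < r_idx d b. if bar d (int a + int b * (-1) ^ i) = c then 1 else 0)"

lemma r_idx_eq_1_iff: "r_idx d a = 1 \<longleftrightarrow> int d dvd 2 * int a"
  unfolding r_idx_def by (auto simp flip: int_dvd_int_iff)

lemma card_signs: "card (signs d a) = r_idx d a"
  unfolding signs_def using r_idx_cases[of d a] by auto

lemma sum_pm_residues_signs:
  assumes d: "d \<ge> 1"
  shows "(\<Sum>s\<in>pm_residues d a. g s) = (\<Sum>\<sigma>\<in>signs d a. g (nat ((\<sigma> * int a) mod int d)))"
proof -
  have "nat ((- int a) mod int d) = nat (int a mod int d) \<longleftrightarrow> (- int a) mod int d = int a mod int d"
    using d by (simp add: eq_nat_nat_iff)
  also have "\<dots> \<longleftrightarrow> int d dvd - (2 * int a)"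
    unfolding mod_eq_dvd_iff by simp
  also have "\<dots> \<longleftrightarrow> r_idx d a = 1"
    unfolding dvd_minus_iff r_idx_eq_1_iff ..
  finally show ?thesis
    unfolding pm_residues_def signs_def by auto
qed

lemma sum_signs_neg:
  assumes periodic: "\<And>x y. int d dvd x - y \<Longrightarrow> P x = P y"
  shows "(\<Sum>\<sigma>\<in>signs d a. P (- \<sigma> * int a)) = (\<Sum>\<sigma>\<in>signs d a. P (\<sigma> * int a))"
proof (cases "r_idx d a = 1")
  case True
  then have "P (- int a) = P (int a)"
    using periodic r_idx_eq_1_iff by (simp add: algebra_simps)
  then show ?thesis using True unfolding signs_def by simp
qed (simp add: signs_def add.commute)

lemma triple_count_signs:
  assumes d: "d \<ge> 1"
  shows "triple_count d a b c = (\<Sum>\<sigma>\<in>signs d a. \<Sum>\<tau>\<in>signs d b. \<Sum>\<mu>\<in>signs d c.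
     if int d dvd \<sigma> * int a + \<tau> * int b - \<mu> * int c then 1 else 0)"
proof -
  have mod_dvd: "int d dvd x mod int d + y mod int d - z mod int d \<longleftrightarrow> int d dvd x + y - z" for x y z
  proof (rule dvd_iff_dvd_of_dvd_diff)
    have "x mod int d + y mod int d - z mod int d - (x + y - z)
        = int d * (z div int d - x div int d - y div int d)"
      by (simp add: algebra_simps flip: minus_div_mult_eq_mod)
    then show "int d dvd x mod int d + y mod int d - z mod int d - (x + y - z)" by simp
  qed
  have "triple_count d a b c = (\<Sum>\<mu>\<in>signs d c. \<Sum>\<tau>\<in>signs d b. \<Sum>\<sigma>\<in>signs d a.
     if int d dvd \<sigma> * int a + \<tau> * int b - \<mu> * int c then 1 else 0)"
    unfolding triple_count_def sum_pm_residues_signs[OF d] using d by (simp add: mod_dvd)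
  also have "\<dots> = (\<Sum>\<mu>\<in>signs d c. \<Sum>\<sigma>\<in>signs d a. \<Sum>\<tau>\<in>signs d b.
     if int d dvd \<sigma> * int a + \<tau> * int b - \<mu> * int c then 1 else 0)"
    by (intro sum.cong refl sum.swap)
  also have "\<dots> = (\<Sum>\<sigma>\<in>signs d a. \<Sum>\<mu>\<in>signs d c. \<Sum>\<tau>\<in>signs d b.
     if int d dvd \<sigma> * int a + \<tau> * int b - \<mu> * int c then 1 else 0)"
    by (rule sum.swap)
  also have "\<dots> = (\<Sum>\<sigma>\<in>signs d a. \<Sum>\<tau>\<in>signs d b. \<Sum>\<mu>\<in>signs d c.
     if int d dvd \<sigma> * int a + \<tau> * int b - \<mu> * int c then 1 else 0)"
    by (intro sum.cong refl sum.swap)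
  finally show ?thesis .
qed

lemma bar_eq_iff:
  assumes d: "d \<ge> 1" and c: "c \<in> idx d"
  shows "bar d x = c \<longleftrightarrow> int d dvd x - int c \<or> int d dvd x + int c"
proof -
  have cd: "c \<le> d div 2" "c < d" using c d unfolding idx_def by auto
  define n where "n = nat (x mod int d)"
  have n: "int n = x mod int d" "n < d" using d unfolding n_def by (auto simp: nat_less_iff)
  have "int d dvd x - int c \<longleftrightarrow> x mod int d = int c mod int d" by (simp add: mod_eq_dvd_iff)
  then have minus: "int d dvd x - int c \<longleftrightarrow> n = c" using cd n by auto
  have "int d dvd x + int c \<longleftrightarrow> x mod int d = (- int c) mod int d"
    using mod_eq_dvd_iff[of x "int d" "- int c"] by simp
  also have "(- int c) mod int d = (if c = 0 then 0 else int d - int c)"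
    using cd by (simp add: zmod_zminus1_eq_if)
  finally have plus: "int d dvd x + int c \<longleftrightarrow> n = (if c = 0 then 0 else d - c)"
    using cd n by auto
  have "bar d x = (if n \<le> d div 2 then n else d - n)"
    unfolding bar_def n_def Let_def ..
  moreover have "2 * (d div 2) \<le> d" "d \<le> 2 * (d div 2) + 1" by auto
  ultimately show ?thesis using minus plus cd n(2) by (cases "n \<le> d div 2") auto
qed

lemma bar_in_idx:
  assumes "d \<ge> 1" shows "bar d x \<in> idx d"
proof -
  define n where "n = nat (x mod int d)"
  have "n < d" using assms unfolding n_def by (auto simp: nat_less_iff)
  moreover have "bar d x = (if n \<le> d div 2 then n else d - n)"
    unfolding bar_def n_def Let_def ..
  moreover have "2 * (d div 2) \<le> d" "d \<le> 2 * (d div 2) + 1" by auto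
  ultimately show ?thesis unfolding idx_def by auto
qed

lemma bar_of_idx:
  assumes "d \<ge> 1" and "a \<in> idx d"
  shows "bar d (int a) = a"
proof -
  have "a < d" using assms unfolding idx_def by auto
  then show ?thesis using assms unfolding bar_def idx_def Let_def by (simp flip: of_nat_mod)
qed

lemma indicator_bar_eq_signs:
  assumes d: "d \<ge> 1" and c: "c \<in> idx d"
  shows "(if bar d x = c then 1 else 0) = (\<Sum>\<mu>\<in>signs d c. if int d dvd x - \<mu> * int c then 1 else 0 :: nat)"
proof (cases "r_idx d c = 1")
  case True
  have "x - int c - (x + int c) = - (2 * int c)" by simp
  then have "int d dvd x - int c \<longleftrightarrow> int d dvd x + int c"
    using True unfolding r_idx_eq_1_iff by (intro dvd_iff_dvd_of_dvd_diff) simp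
  then show ?thesis using True unfolding bar_eq_iff[OF d c] signs_def by auto
next
  case False
  have "x + int c - (x - int c) = 2 * int c" by simp
  then have "\<not> (int d dvd x - int c \<and> int d dvd x + int c)"
    using False dvd_diff[of "int d" "x + int c" "x - int c"] unfolding r_idx_eq_1_iff by auto
  then show ?thesis using False unfolding bar_eq_iff[OF d c] signs_def by auto
qed

lemma pm_count_signs:
  assumes d: "d \<ge> 1" and c: "c \<in> idx d"
  shows "pm_count d a b c = (\<Sum>\<tau>\<in>signs d b. \<Sum>\<mu>\<in>signs d c.
     if int d dvd int a + \<tau> * int b - \<mu> * int c then 1 else 0)"
proof -
  have "(\<Sum>i < r_idx d b. g ((-1) ^ i)) = (\<Sum>\<tau>\<in>signs d b. g \<tau>)" for g :: "int \<Rightarrow> nat"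
    unfolding signs_def using r_idx_cases[of d b] by (auto simp: numeral_2_eq_2)
  from this[of "\<lambda>\<tau>. if bar d (int a + \<tau> * int b) = c then 1 else 0"]
  have "pm_count d a b c = (\<Sum>\<tau>\<in>signs d b. if bar d (int a + \<tau> * int b) = c then 1 else 0)"
    unfolding pm_count_def by (simp add: mult.commute)
  then show ?thesis
    unfolding indicator_bar_eq_signs[OF d c] .
qed

lemma triple_count_eq_pm_count:
  assumes d: "d \<ge> 1" and c: "c \<in> idx d"
  shows "triple_count d a b c = r_idx d a * pm_count d a b c"
proof -
  define F where "F \<sigma> = (\<Sum>\<tau>\<in>signs d b. \<Sum>\<mu>\<in>signs d c.
     if int d dvd \<sigma> * int a + \<tau> * int b - \<mu> * int c then 1 else 0 :: nat)" for \<sigma>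
  have F_1: "F 1 = pm_count d a b c"
    unfolding F_def pm_count_signs[OF d c] by simp
  have inner: "(\<Sum>\<mu>\<in>signs d c. if int d dvd x - - \<mu> * int c then 1 else 0)
      = (\<Sum>\<mu>\<in>signs d c. if int d dvd x - \<mu> * int c then 1 else 0 :: nat)" for x
    by (rule sum_signs_neg) (simp add: dvd_iff_dvd_of_dvd_diff[of _ "x - _" "x - _"])
  have outer: "(\<Sum>\<tau>\<in>signs d b. \<Sum>\<mu>\<in>signs d c. if int d dvd int a + - \<tau> * int b - \<mu> * int c then 1 else 0)
      = (\<Sum>\<tau>\<in>signs d b. \<Sum>\<mu>\<in>signs d c. if int d dvd int a + \<tau> * int b - \<mu> * int c then 1 else 0 :: nat)"
  proof (rule sum_signs_neg)
    fix x y assume "int d dvd x - y"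
    then have "int d dvd int a + x - z \<longleftrightarrow> int d dvd int a + y - z" for z
      by (intro dvd_iff_dvd_of_dvd_diff) (simp add: algebra_simps)
    then show "(\<Sum>\<mu>\<in>signs d c. if int d dvd int a + x - \<mu> * int c then 1 else 0)
      = (\<Sum>\<mu>\<in>signs d c. if int d dvd int a + y - \<mu> * int c then 1 else 0 :: nat)"
      by simp
  qed
  (* F (-1) = F 1: negate all three signs, then undo the negation of the signs of b and c,
     which only permutes the summands modulo d *)
  have "- int a + \<tau> * int b - \<mu> * int c = - ((int a + - \<tau> * int b) - - \<mu> * int c)" for \<tau> \<mu>
    by simp
  then have "F (-1) = (\<Sum>\<tau>\<in>signs d b. \<Sum>\<mu>\<in>signs d c.
     if int d dvd (int a + - \<tau> * int b) - - \<mu> * int c then 1 else 0)"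
    unfolding F_def by (simp only: dvd_minus_iff mult_minus_left mult_1)
  also have "\<dots> = F 1"
    unfolding inner outer F_def by (simp add: algebra_simps)
  finally have "F \<sigma> = F 1" if "\<sigma> \<in> signs d a" for \<sigma>
    using that unfolding signs_def by (auto split: if_splits)
  then have "triple_count d a b c = card (signs d a) * F 1"
    unfolding triple_count_signs[OF d] F_def[symmetric] by simp
  then show ?thesis unfolding card_signs F_1 .
qed

definition sign_compatible :: "nat \<Rightarrow> nat \<Rightarrow> nat \<Rightarrow> nat \<Rightarrow> nat \<Rightarrow> nat \<Rightarrow> bool" where
  "sign_compatible d a al b be ga \<longleftrightarrow>
     (al + be) mod gcd (s_idx d a) (s_idx d b) = ga mod gcd (s_idx d a) (s_idx d b)"

lemma r_idx_eq_1_of_pm_count: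
  assumes d: "d \<ge> 1" and c: "c \<in> idx d"
    and ra: "r_idx d a = 1" and rb: "r_idx d b = 1" and N: "pm_count d a b c \<noteq> 0"
  shows "r_idx d c = 1"
proof -
  have "bar d (int a + int b) = c" using N rb unfolding pm_count_def by (auto split: if_splits)
  then have "int d dvd (int a + int b) - int c \<or> int d dvd (int a + int b) + int c"
    using bar_eq_iff[OF d c] by blast
  moreover have "int d dvd 2 * (int a + int b)"
    using ra rb unfolding r_idx_eq_1_iff by (simp add: distrib_left)
  ultimately have "int d dvd 2 * (int a + int b) - 2 * ((int a + int b) - int c)
                 \<or> int d dvd 2 * ((int a + int b) + int c) - 2 * (int a + int b)"
    by (metis dvd_diff dvd_mult)
  then show ?thesis unfolding r_idx_eq_1_iff by (simp add: algebra_simps)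
qed

lemma r_idx_mult_cf_inner_theta:
  assumes d: "d \<ge> 1" and c: "c \<in> idx d"
    and al: "al < s_idx d a" and be: "be < s_idx d b" and ga: "ga < s_idx d c"
  shows "of_nat (r_idx d b) * cf_inner d (\<lambda>g. theta d a al g * theta d b be g) (theta d c ga)
    = of_nat (gcd (r_idx d a) (r_idx d b) * pm_count d a b c *
              (if sign_compatible d a al b be ga then 1 else 0))"
proof -
  let ?N = "pm_count d a b c"
  have inner: "cf_inner d (\<lambda>g. theta d a al g * theta d b be g) (theta d c ga)
    = of_nat (r_idx d a * ?N) *
      (1 + (if r_idx d a = 1 \<and> r_idx d b = 1 \<and> r_idx d c = 1 then (-1) ^ (al + be + ga) else 0)) / 2"
    unfolding cf_inner_theta_product[OF d] triple_count_eq_pm_count[OF d c] ..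
  consider "r_idx d a = 1" "r_idx d b = 1" | "r_idx d a = 2 \<or> r_idx d b = 2"
    using r_idx_cases by blast
  then show ?thesis
  proof cases
    case 1
    show ?thesis
    proof (cases "?N = 0")
      case False
      then have "r_idx d c = 1" using r_idx_eq_1_of_pm_count[OF d c 1] by blast
      moreover have "s_idx d a = 2" "s_idx d b = 2" using 1 by (simp_all add: s_idx_eq)
      moreover have "sign_compatible d a al b be ga \<longleftrightarrow> even (al + be + ga)"
        using \<open>s_idx d a = 2\<close> \<open>s_idx d b = 2\<close> unfolding sign_compatible_def
        by (simp del: One_nat_def) presburger
      ultimately show ?thesis using 1 unfolding inner by (simp add: minus_one_power_iff)
    qed (simp add: inner)
  next
    case 2
    then have "s_idx d a = 1 \<or> s_idx d b = 1" by (auto simp: s_idx_eq)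
    then have "sign_compatible d a al b be ga" unfolding sign_compatible_def by auto
    moreover have "r_idx d b * r_idx d a = 2 * gcd (r_idx d a) (r_idx d b)"
      using 2 r_idx_cases[of d a] r_idx_cases[of d b] by auto
    then have "(of_nat (r_idx d b) * of_nat (r_idx d a) :: complex)
        = 2 * of_nat (gcd (r_idx d a) (r_idx d b))"
      by (metis of_nat_mult of_nat_numeral)
    ultimately show ?thesis using 2 unfolding inner by (auto simp: field_simps)
  qed
qed

lemma theta_0_0: "theta d 0 0 = (\<lambda>g. 1)"
  unfolding theta_def r_idx_def by (auto simp: fun_eq_iff)

lemma cf_inner_theta_orthonormal:
  assumes d: "d \<ge> 1" and a: "a \<in> idx d" and c: "c \<in> idx d"
    and al: "al < s_idx d a" and ga: "ga < s_idx d c"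
  shows "cf_inner d (theta d a al) (theta d c ga) = (if a = c \<and> al = ga then 1 else 0)"
proof -
  have r0: "r_idx d 0 = 1" "s_idx d 0 = 2" unfolding s_idx_def r_idx_def by auto
  have "cf_inner d (theta d a al) (theta d c ga)
      = of_nat (pm_count d a 0 c * (if sign_compatible d a al 0 0 ga then 1 else 0))"
    using r_idx_mult_cf_inner_theta[OF d c al _ ga, of 0 0] r0 by (simp add: theta_0_0)
  moreover have "pm_count d a 0 c = (if a = c then 1 else 0)"
    unfolding pm_count_def r0 using bar_of_idx[OF d a] by simp
  moreover have "sign_compatible d a al 0 0 ga \<longleftrightarrow> al mod s_idx d a = ga mod s_idx d a"
    unfolding sign_compatible_def r0 using s_idx_eq[of d a] by auto
  ultimately show ?thesis using al ga by auto
qed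

lemma theta_inj:
  assumes d: "d \<ge> 1" and "a \<in> idx d" "c \<in> idx d" "al < s_idx d a" "ga < s_idx d c"
    and eq: "theta d a al = theta d c ga"
  shows "a = c \<and> al = ga"
  using cf_inner_theta_orthonormal[OF assms(1-5)] cf_inner_theta_orthonormal[OF d assms(2,2,4,4)] eq
  by (auto split: if_splits)

section \<open>Character degrees and the weighted character quasigroup\<close>

definition char_index :: "nat \<Rightarrow> (nat \<times> nat) set" where
  "char_index d = Sigma (idx d) (\<lambda>a. {..<s_idx d a})"

lemma mem_char_index [simp]: "(a, al) \<in> char_index d \<longleftrightarrow> a \<in> idx d \<and> al < s_idx d a"
  unfolding char_index_def by auto

lemma finite_char_index: "finite (char_index d)"
  unfolding char_index_def idx_def by auto

lemma r_idx_eq_1_set: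
  assumes d: "d \<ge> 1"
  shows "{a \<in> idx d. r_idx d a = 1} = (if even d then {0, d div 2} else {0})"
proof -
  have small: "d dvd 2 * a \<longleftrightarrow> 2 * a = 0 \<or> 2 * a = d" if "2 * a \<le> d" for a
  proof
    assume "d dvd 2 * a"
    then obtain k where "2 * a = d * k" by blast
    with that d show "2 * a = 0 \<or> 2 * a = d" by (cases k) auto
  qed auto
  have "{a \<in> idx d. r_idx d a = 1} = {a. a \<le> d div 2 \<and> (2 * a = 0 \<or> 2 * a = d)}"
    unfolding idx_def r_idx_def using small by auto
  also have "\<dots> = (if even d then {0, d div 2} else {0})"
    by (auto elim!: evenE)
  finally show ?thesis .
qed

lemma sum_r_idx:
  assumes d: "d \<ge> 1"
  shows "(\<Sum>a\<in>idx d. r_idx d a) = d"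
proof -
  have fin: "finite (idx d)" by (simp add: idx_def)
  have "(\<Sum>a\<in>idx d. r_idx d a + (if r_idx d a = 1 then 1 else 0)) = (\<Sum>a\<in>idx d. 2)"
    using r_idx_cases by (intro sum.cong) auto
  then have "(\<Sum>a\<in>idx d. r_idx d a) + card {a \<in> idx d. r_idx d a = 1} = 2 * (d div 2 + 1)"
    using fin by (simp add: sum.distrib sum.If_cases Int_def idx_def)
  moreover have "card {a \<in> idx d. r_idx d a = 1} = (if even d then 2 else 1)"
    unfolding r_idx_eq_1_set[OF d] using d by auto
  ultimately show ?thesis by (cases "even d") auto
qed

lemma sum_r_idx_squares:
  assumes d: "d \<ge> 1"
  shows "(\<Sum>p\<in>char_index d. r_idx d (fst p) ^ 2) = 2 * d"
proof -
  have "(\<Sum>p\<in>char_index d. r_idx d (fst p) ^ 2) = (\<Sum>a\<in>idx d. \<Sum>al<s_idx d a. r_idx d a ^ 2)"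
    unfolding char_index_def by (subst sum.Sigma) (auto simp: idx_def case_prod_beta)
  also have "\<dots> = (\<Sum>a\<in>idx d. 2 * r_idx d a)"
    using r_idx_cases by (intro sum.cong) (auto simp: s_idx_eq power2_eq_square)
  also have "\<dots> = 2 * d"
    using sum_r_idx[OF d] by (simp flip: sum_distrib_left)
  finally show ?thesis .
qed

lemma char_deg_theta:
  assumes "d \<ge> 1"
  shows "char_deg (theta d a al) = of_nat (r_idx d a)"
  unfolding char_deg_def dih_one_def theta_rotation sum_pm_residues_signs[OF assms]
  by (simp add: card_signs)

lemma wcq_weight_theta: "d \<ge> 1 \<Longrightarrow> wcq_weight (theta d a al) = of_nat (r_idx d a ^ 2)"
  unfolding wcq_weight_def by (simp add: char_deg_theta)

(* r_c times the coefficient of every q in S_{c,ga} on the right-hand side of the block equation *)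
definition prod_weight :: "nat \<Rightarrow> nat \<Rightarrow> nat \<Rightarrow> nat \<Rightarrow> nat \<Rightarrow> nat \<Rightarrow> nat \<Rightarrow> nat" where
  "prod_weight d a al b be c ga = r_idx d a * gcd (r_idx d a) (r_idx d b) * pm_count d a b c *
     (if sign_compatible d a al b be ga then 1 else 0)"

lemma wcq_mult_theta:
  assumes d: "d \<ge> 1" and c: "c \<in> idx d"
    and al: "al < s_idx d a" and be: "be < s_idx d b" and ga: "ga < s_idx d c"
  shows "wcq_mult d (theta d a al) (theta d b be) (theta d c ga)
    = of_nat (r_idx d c * prod_weight d a al b be c ga)"
proof -
  have "wcq_mult d (theta d a al) (theta d b be) (theta d c ga)
    = of_nat (r_idx d a) * of_nat (r_idx d c) *
      (of_nat (r_idx d b) * cf_inner d (\<lambda>g. theta d a al g * theta d b be g) (theta d c ga))"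
    unfolding wcq_mult_def char_deg_theta[OF d] by (simp add: algebra_simps)
  then show ?thesis
    unfolding r_idx_mult_cf_inner_theta[OF assms] prod_weight_def by (simp add: algebra_simps)
qed

lemma rhs_coeff_in_block:
  assumes d: "d \<ge> 1" and c: "c \<in> idx d" and ga: "ga < s_idx d c" and q: "q \<in> S c ga"
    and disjoint: "\<And>c' ga'. c' \<in> idx d \<Longrightarrow> ga' < s_idx d c' \<Longrightarrow> q \<in> S c' ga' \<Longrightarrow> c' = c \<and> ga' = ga"
  shows "rhs_coeff d S a al b be q = of_nat (prod_weight d a al b be c ga) / of_nat (r_idx d c)"
proof -
  let ?G = "\<lambda>c'. {ga'. ga' < s_idx d c' \<and>
      (al + be) mod gcd (s_idx d a) (s_idx d b) = ga' mod gcd (s_idx d a) (s_idx d b)}"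
  have block: "(\<Sum>ga' \<in> ?G c'. (if q \<in> S c' ga' then 1 else 0) / of_nat (r_idx d c'))
      = (if c' = c \<and> sign_compatible d a al b be ga then 1 / of_nat (r_idx d c) else (0 :: rat))"
    if c': "c' \<in> idx d" for c'
  proof -
    have "(\<Sum>ga' \<in> ?G c'. (if q \<in> S c' ga' then 1 else 0) / of_nat (r_idx d c'))
        = (\<Sum>ga' \<in> ?G c'. if ga' = ga then (if c' = c then 1 / of_nat (r_idx d c) else 0) else (0 :: rat))"
      using disjoint[of c'] q c' by (intro sum.cong) auto
    then show ?thesis using ga unfolding sign_compatible_def by auto
  qed
  have "rhs_coeff d S a al b be q = of_nat (r_idx d a * gcd (r_idx d a) (r_idx d b)) *
      (\<Sum>i < r_idx d b. of_nat (if bar d (int a + int b * (-1) ^ i) = c then 1 else 0) *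
         (if sign_compatible d a al b be ga then 1 / of_nat (r_idx d c) else 0))"
    unfolding rhs_coeff_def Let_def using block bar_in_idx[OF d]
    by (intro arg_cong2[where f = "(*)"] sum.cong) auto
  also have "\<dots> = of_nat (r_idx d a * gcd (r_idx d a) (r_idx d b)) * of_nat (pm_count d a b c) *
      (if sign_compatible d a al b be ga then 1 / of_nat (r_idx d c) else 0)"
    unfolding pm_count_def by (simp add: of_nat_sum sum_distrib_right)
  finally show ?thesis
    unfolding prod_weight_def by simp
qed

section \<open>Balanced covers and block decompositions\<close>

definition block_product_law :: "nat \<Rightarrow> 'q set \<Rightarrow> ('q \<Rightarrow> 'q \<Rightarrow> 'q) \<Rightarrow> (nat \<Rightarrow> nat \<Rightarrow> 'q set) \<Rightarrow> bool" where
  "block_product_law d Q m S \<longleftrightarrow>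
     (\<forall>a \<in> idx d. \<forall>al < s_idx d a. \<forall>b \<in> idx d. \<forall>be < s_idx d b. \<forall>q \<in> Q.
        of_nat (set_prod_coeff m (S a al) (S b be) q) = rhs_coeff d S a al b be q)"

lemma card_pairs_prod_in:
  assumes "finite A" "finite B" "finite C"
  shows "card {(x, y). x \<in> A \<and> y \<in> B \<and> m x y \<in> C} = (\<Sum>q\<in>C. set_prod_coeff m A B q)"
proof -
  have eq: "{(x, y). x \<in> A \<and> y \<in> B \<and> m x y \<in> C} = (\<Union>q\<in>C. {(x, y). x \<in> A \<and> y \<in> B \<and> m x y = q})"
    by auto
  have fin: "finite {(x, y). x \<in> A \<and> y \<in> B \<and> m x y = q}" for q
    by (rule finite_subset[of _ "A \<times> B"]) (use assms in auto)
  have "card (\<Union>q\<in>C. {(x, y). x \<in> A \<and> y \<in> B \<and> m x y = q})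
      = (\<Sum>q\<in>C. card {(x, y). x \<in> A \<and> y \<in> B \<and> m x y = q})"
    by (rule card_UN_disjoint) (use assms fin in auto)
  then show ?thesis unfolding set_prod_coeff_def eq .
qed

lemma mult_eq_on_iff_constant_sum:
  fixes P :: "'a \<Rightarrow> nat"
  assumes "finite A" and card: "card A = r ^ 2" and "r > 0"
  shows "(\<forall>q\<in>A. r * P q = K) \<longleftrightarrow> (\<forall>q\<in>A. \<forall>q'\<in>A. P q = P q') \<and> sum P A = r * K"
proof
  assume const: "\<forall>q\<in>A. r * P q = K"
  have "r * sum P A = (\<Sum>q\<in>A. r * P q)" by (simp add: sum_distrib_left)
  also have "\<dots> = (\<Sum>q\<in>A. K)" using const by (intro sum.cong) auto
  also have "\<dots> = r * (r * K)" using card by (simp add: power2_eq_square)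
  finally have "sum P A = r * K" using \<open>r > 0\<close> by simp
  moreover have "P q = P q'" if "q \<in> A" "q' \<in> A" for q q'
  proof -
    have "r * P q = r * P q'" using const that by simp
    then show ?thesis using \<open>r > 0\<close> by simp
  qed
  ultimately show "(\<forall>q\<in>A. \<forall>q'\<in>A. P q = P q') \<and> sum P A = r * K" by blast
next
  assume "(\<forall>q\<in>A. \<forall>q'\<in>A. P q = P q') \<and> sum P A = r * K"
  then have const: "\<forall>q\<in>A. \<forall>q'\<in>A. P q = P q'" and sum: "sum P A = r * K" by blast+
  show "\<forall>q\<in>A. r * P q = K"
  proof
    fix q assume q: "q \<in> A"
    have "sum P A = (\<Sum>q'\<in>A. P q)" using const q by (intro sum.cong) blast+
    then have "sum P A = card A * P q" by simp
    then have "r * (r * P q) = r * K" using sum card by (auto simp: power2_eq_square)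
    then show "r * P q = K" using \<open>r > 0\<close> by simp
  qed
qed

lemma of_nat_eq_divide_iff:
  assumes "r > 0"
  shows "(of_nat p = (of_nat k / of_nat r :: rat)) \<longleftrightarrow> r * p = k"
proof -
  have "(of_nat p = (of_nat k / of_nat r :: rat)) \<longleftrightarrow> of_nat (r * p) = (of_nat k :: rat)"
    using assms by (auto simp: field_simps)
  then show ?thesis by (simp only: of_nat_eq_iff)
qed

lemma ball_Irr_iff: "(\<forall>th \<in> Irr d. P th) \<longleftrightarrow> (\<forall>c \<in> idx d. \<forall>ga < s_idx d c. P (theta d c ga))"
  unfolding Irr_def by blast

(* Both directions of the main theorem are instances: S the fibres of a given f, or f the
   block label of a given decomposition S. *)
locale character_labelling =
  fixes d :: nat and Q :: "'q set" and m :: "'q \<Rightarrow> 'q \<Rightarrow> 'q"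
    and f :: "'q \<Rightarrow> nat \<times> nat \<Rightarrow> complex" and S :: "nat \<Rightarrow> nat \<Rightarrow> 'q set"
  assumes d_pos: "d \<ge> 1"
    and finite_Q: "finite Q"
    and closed: "\<And>x y. x \<in> Q \<Longrightarrow> y \<in> Q \<Longrightarrow> m x y \<in> Q"
    and range_f: "f ` Q = Irr d"
    and S_fibre: "\<And>c ga. c \<in> idx d \<Longrightarrow> ga < s_idx d c \<Longrightarrow> S c ga = {q \<in> Q. f q = theta d c ga}"
    and card_S: "\<And>c ga. c \<in> idx d \<Longrightarrow> ga < s_idx d c \<Longrightarrow> card (S c ga) = r_idx d c ^ 2"
begin

lemma finite_S: "c \<in> idx d \<Longrightarrow> ga < s_idx d c \<Longrightarrow> finite (S c ga)"
  by (simp add: S_fibre finite_Q)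

lemma S_unique:
  assumes "c \<in> idx d" "ga < s_idx d c" "c' \<in> idx d" "ga' < s_idx d c'"
    and "q \<in> S c ga" "q \<in> S c' ga'"
  shows "c' = c \<and> ga' = ga"
proof -
  have "theta d c' ga' = theta d c ga"
    using assms S_fibre by simp
  then show ?thesis using theta_inj[OF d_pos] assms(1-4) by blast
qed

lemma S_disjoint:
  "\<forall>a \<in> idx d. \<forall>al < s_idx d a. \<forall>b \<in> idx d. \<forall>be < s_idx d b.
     (a, al) \<noteq> (b, be) \<longrightarrow> S a al \<inter> S b be = {}"
proof (intro ballI allI impI)
  fix a al b be
  assume "a \<in> idx d" "al < s_idx d a" "b \<in> idx d" "be < s_idx d b" "(a, al) \<noteq> (b, be)"
  then show "S a al \<inter> S b be = {}" using S_unique[of a al b be] by blast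
qed

lemma ex_block:
  assumes "q \<in> Q"
  obtains c ga where "c \<in> idx d" "ga < s_idx d c" "q \<in> S c ga"
proof -
  have "f q \<in> Irr d" using range_f assms by blast
  then obtain c ga where "c \<in> idx d" "ga < s_idx d c" "f q = theta d c ga"
    unfolding Irr_def by blast
  then show ?thesis using that assms S_fibre by blast
qed

lemma S_subset: "c \<in> idx d \<Longrightarrow> ga < s_idx d c \<Longrightarrow> S c ga \<subseteq> Q"
  using S_fibre by blast

lemma ball_Q_iff: "(\<forall>q \<in> Q. R q) \<longleftrightarrow> (\<forall>c \<in> idx d. \<forall>ga < s_idx d c. \<forall>q \<in> S c ga. R q)"
proof
  assume "\<forall>q \<in> Q. R q"
  then show "\<forall>c \<in> idx d. \<forall>ga < s_idx d c. \<forall>q \<in> S c ga. R q" using S_subset by blast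
next
  assume R: "\<forall>c \<in> idx d. \<forall>ga < s_idx d c. \<forall>q \<in> S c ga. R q"
  show "\<forall>q \<in> Q. R q"
  proof
    fix q assume "q \<in> Q"
    then obtain c ga where "c \<in> idx d" "ga < s_idx d c" "q \<in> S c ga" by (rule ex_block)
    then show "R q" using R by blast
  qed
qed

lemma ball_same_label_iff:
  "(\<forall>q \<in> Q. \<forall>q' \<in> Q. f q = f q' \<longrightarrow> R q q') \<longleftrightarrow>
   (\<forall>c \<in> idx d. \<forall>ga < s_idx d c. \<forall>q \<in> S c ga. \<forall>q' \<in> S c ga. R q q')"
proof
  assume R: "\<forall>q \<in> Q. \<forall>q' \<in> Q. f q = f q' \<longrightarrow> R q q'"
  show "\<forall>c \<in> idx d. \<forall>ga < s_idx d c. \<forall>q \<in> S c ga. \<forall>q' \<in> S c ga. R q q'"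
  proof (intro ballI allI impI)
    fix c ga q q' assume "c \<in> idx d" "ga < s_idx d c" "q \<in> S c ga" "q' \<in> S c ga"
    then have "q \<in> Q" "q' \<in> Q" "f q = f q'" using S_fibre by auto
    then show "R q q'" using R by blast
  qed
next
  assume R: "\<forall>c \<in> idx d. \<forall>ga < s_idx d c. \<forall>q \<in> S c ga. \<forall>q' \<in> S c ga. R q q'"
  show "\<forall>q \<in> Q. \<forall>q' \<in> Q. f q = f q' \<longrightarrow> R q q'"
  proof (intro ballI impI)
    fix q q' assume q': "q' \<in> Q" and q: "q \<in> Q" "f q = f q'"
    obtain c ga where c: "c \<in> idx d" "ga < s_idx d c" and "q \<in> S c ga"
      using ex_block q(1) by blast
    then have "f q' = theta d c ga" using S_fibre q(2) by auto
    then have "q' \<in> S c ga" using S_fibre[OF c] q' by blast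
    then show "R q q'" using R c \<open>q \<in> S c ga\<close> by blast
  qed
qed

lemma count_label_pairs:
  assumes "a \<in> idx d" "al < s_idx d a" "b \<in> idx d" "be < s_idx d b"
  shows "card {(x, y). x \<in> Q \<and> y \<in> Q \<and> f x = theta d a al \<and> f y = theta d b be \<and> m x y = p}
    = set_prod_coeff m (S a al) (S b be) p"
  unfolding set_prod_coeff_def S_fibre[OF assms(1,2)] S_fibre[OF assms(3,4)]
  by (rule arg_cong[where f = card]) blast

lemma count_label_triples:
  assumes "a \<in> idx d" "al < s_idx d a" "b \<in> idx d" "be < s_idx d b" "c \<in> idx d" "ga < s_idx d c"
  shows "card {(x, y). x \<in> Q \<and> y \<in> Q \<and> f x = theta d a al \<and> f y = theta d b be \<and> f (m x y) = theta d c ga}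
    = (\<Sum>q\<in>S c ga. set_prod_coeff m (S a al) (S b be) q)"
proof -
  have "{(x, y). x \<in> Q \<and> y \<in> Q \<and> f x = theta d a al \<and> f y = theta d b be \<and> f (m x y) = theta d c ga}
      = {(x, y). x \<in> S a al \<and> y \<in> S b be \<and> m x y \<in> S c ga}"
    unfolding S_fibre[OF assms(1,2)] S_fibre[OF assms(3,4)] S_fibre[OF assms(5,6)] using closed by blast
  then show ?thesis
    using card_pairs_prod_in[OF finite_S[OF assms(1,2)] finite_S[OF assms(3,4)] finite_S[OF assms(5,6)]]
    by simp
qed

lemma is_cover_iff:
  "is_cover d Q m f \<longleftrightarrow>
     (\<forall>a \<in> idx d. \<forall>al < s_idx d a. \<forall>b \<in> idx d. \<forall>be < s_idx d b. \<forall>c \<in> idx d. \<forall>ga < s_idx d c.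
        (\<Sum>q\<in>S c ga. set_prod_coeff m (S a al) (S b be) q) = r_idx d c * prod_weight d a al b be c ga)"
proof -
  have weights: "\<forall>c \<in> idx d. \<forall>ga < s_idx d c.
      of_nat (card {q \<in> Q. f q = theta d c ga}) = wcq_weight (theta d c ga)"
    using card_S S_fibre by (simp add: wcq_weight_theta[OF d_pos])
  have triple: "of_nat (card {(x, y). x \<in> Q \<and> y \<in> Q \<and> f x = theta d a al \<and> f y = theta d b be
                                   \<and> f (m x y) = theta d c ga})
        = wcq_mult d (theta d a al) (theta d b be) (theta d c ga)
      \<longleftrightarrow> (\<Sum>q\<in>S c ga. set_prod_coeff m (S a al) (S b be) q) = r_idx d c * prod_weight d a al b be c ga"
    if "a \<in> idx d" "al < s_idx d a" "b \<in> idx d" "be < s_idx d b" "c \<in> idx d" "ga < s_idx d c"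
    for a al b be c ga
    unfolding count_label_triples[OF that] wcq_mult_theta[OF d_pos that(5,2,4,6)] of_nat_eq_iff ..
  have "is_cover d Q m f \<longleftrightarrow>
     (\<forall>a \<in> idx d. \<forall>al < s_idx d a. \<forall>b \<in> idx d. \<forall>be < s_idx d b. \<forall>c \<in> idx d. \<forall>ga < s_idx d c.
        of_nat (card {(x, y). x \<in> Q \<and> y \<in> Q \<and> f x = theta d a al \<and> f y = theta d b be
                                   \<and> f (m x y) = theta d c ga})
        = wcq_mult d (theta d a al) (theta d b be) (theta d c ga))"
    unfolding is_cover_def ball_Irr_iff using range_f weights by blast
  then show ?thesis using triple by blast
qed

lemma is_balanced_iff:
  "is_balanced Q m f (Irr d) \<longleftrightarrow>
     (\<forall>a \<in> idx d. \<forall>al < s_idx d a. \<forall>b \<in> idx d. \<forall>be < s_idx d b. \<forall>c \<in> idx d. \<forall>ga < s_idx d c.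
        \<forall>q \<in> S c ga. \<forall>q' \<in> S c ga.
          set_prod_coeff m (S a al) (S b be) q = set_prod_coeff m (S a al) (S b be) q')"
  unfolding is_balanced_def ball_Irr_iff ball_same_label_iff
  by (simp add: count_label_pairs)

lemma block_product_law_iff:
  "block_product_law d Q m S \<longleftrightarrow>
     (\<forall>a \<in> idx d. \<forall>al < s_idx d a. \<forall>b \<in> idx d. \<forall>be < s_idx d b. \<forall>c \<in> idx d. \<forall>ga < s_idx d c.
        \<forall>q \<in> S c ga. r_idx d c * set_prod_coeff m (S a al) (S b be) q = prod_weight d a al b be c ga)"
proof -
  have pointwise: "of_nat (set_prod_coeff m (S a al) (S b be) q) = rhs_coeff d S a al b be q
      \<longleftrightarrow> r_idx d c * set_prod_coeff m (S a al) (S b be) q = prod_weight d a al b be c ga"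
    if "c \<in> idx d" "ga < s_idx d c" "q \<in> S c ga" for a al b be c ga q
  proof -
    have "rhs_coeff d S a al b be q = of_nat (prod_weight d a al b be c ga) / of_nat (r_idx d c)"
      by (rule rhs_coeff_in_block[where S = S, OF d_pos that]) (use S_unique that in blast)
    then show ?thesis using of_nat_eq_divide_iff[OF r_idx_pos] by simp
  qed
  show ?thesis
    unfolding block_product_law_def ball_Q_iff using pointwise by blast
qed

theorem cover_balanced_iff_block_product_law:
  "is_cover d Q m f \<and> is_balanced Q m f (Irr d) \<longleftrightarrow> block_product_law d Q m S"
proof -
  have "(\<forall>q \<in> S c ga. r_idx d c * set_prod_coeff m (S a al) (S b be) q = prod_weight d a al b be c ga)
      \<longleftrightarrow> (\<forall>q \<in> S c ga. \<forall>q' \<in> S c ga.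
             set_prod_coeff m (S a al) (S b be) q = set_prod_coeff m (S a al) (S b be) q')
         \<and> (\<Sum>q\<in>S c ga. set_prod_coeff m (S a al) (S b be) q) = r_idx d c * prod_weight d a al b be c ga"
    if "c \<in> idx d" "ga < s_idx d c" for a al b be c ga
    using mult_eq_on_iff_constant_sum[OF finite_S[OF that] card_S[OF that] r_idx_pos] .
  then show ?thesis
    unfolding is_cover_iff is_balanced_iff block_product_law_iff
    by (simp add: ball_conj_distrib all_conj_distrib imp_conjR conj_commute)
qed

end

definition dihedral_block_system :: "nat \<Rightarrow> 'q set \<Rightarrow> ('q \<Rightarrow> 'q \<Rightarrow> 'q) \<Rightarrow> (nat \<Rightarrow> nat \<Rightarrow> 'q set) \<Rightarrow> bool" where
  "dihedral_block_system d Q m S \<longleftrightarrow>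
     (\<forall>a \<in> idx d. \<forall>al < s_idx d a. S a al \<subseteq> Q \<and> card (S a al) = r_idx d a ^ 2) \<and>
     (\<forall>a \<in> idx d. \<forall>al < s_idx d a. \<forall>b \<in> idx d. \<forall>be < s_idx d b.
        (a, al) \<noteq> (b, be) \<longrightarrow> S a al \<inter> S b be = {}) \<and>
     block_product_law d Q m S"

lemma quasigroup_closed: "quasigroup Q m \<Longrightarrow> x \<in> Q \<Longrightarrow> y \<in> Q \<Longrightarrow> m x y \<in> Q"
  unfolding quasigroup_def by blast

lemma balanced_cover_imp_block_system:
  assumes d: "d \<ge> 1" and fin: "finite Q" and qg: "quasigroup Q m"
    and cover: "is_cover d Q m f" and balanced: "is_balanced Q m f (Irr d)"
  shows "dihedral_block_system d Q m (\<lambda>a al. {q \<in> Q. f q = theta d a al})"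
proof -
  define S where "S a al = {q \<in> Q. f q = theta d a al}" for a al
  have card: "card (S c ga) = r_idx d c ^ 2" if "c \<in> idx d" "ga < s_idx d c" for c ga
  proof -
    have "theta d c ga \<in> Irr d" using that unfolding Irr_def by blast
    then have "of_nat (card (S c ga)) = wcq_weight (theta d c ga)"
      using cover unfolding is_cover_def S_def by blast
    then show ?thesis unfolding wcq_weight_theta[OF d] of_nat_eq_iff .
  qed
  interpret character_labelling d Q m f S
    using d fin quasigroup_closed[OF qg] cover card unfolding is_cover_def S_def
    by unfold_locales auto
  have "block_product_law d Q m S"
    using cover balanced cover_balanced_iff_block_product_law by blast
  then show ?thesis
    unfolding dihedral_block_system_def S_def[symmetric] using S_disjoint S_subset card by blast
qed

lemma block_system_covers:
  assumes d: "d \<ge> 1" and fin: "finite Q" and cQ: "card Q = 2 * d"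
    and blocks: "dihedral_block_system d Q m S"
  shows "(\<Union>p\<in>char_index d. S (fst p) (snd p)) = Q"
proof (rule card_subset_eq[OF fin])
  have "S a al \<subseteq> Q \<and> card (S a al) = r_idx d a ^ 2" if "(a, al) \<in> char_index d" for a al
    using blocks that unfolding dihedral_block_system_def by simp
  then have sub: "S (fst p) (snd p) \<subseteq> Q" and card: "card (S (fst p) (snd p)) = r_idx d (fst p) ^ 2"
    if "p \<in> char_index d" for p
    using that by (cases p, fastforce)+
  then show "(\<Union>p\<in>char_index d. S (fst p) (snd p)) \<subseteq> Q" by blast
  have "card (\<Union>p\<in>char_index d. S (fst p) (snd p)) = (\<Sum>p\<in>char_index d. card (S (fst p) (snd p)))"
  proof (rule card_UN_disjoint[OF finite_char_index])
    show "\<forall>p\<in>char_index d. finite (S (fst p) (snd p))"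
      using sub fin by (auto intro: finite_subset)
    show "\<forall>p\<in>char_index d. \<forall>p'\<in>char_index d. p \<noteq> p' \<longrightarrow> S (fst p) (snd p) \<inter> S (fst p') (snd p') = {}"
      using blocks unfolding dihedral_block_system_def char_index_def by fastforce
  qed
  also have "\<dots> = 2 * d"
    using card sum_r_idx_squares[OF d] by simp
  finally show "card (\<Union>p\<in>char_index d. S (fst p) (snd p)) = card Q" using cQ by simp
qed

definition block_label :: "nat \<Rightarrow> (nat \<Rightarrow> nat \<Rightarrow> 'q set) \<Rightarrow> 'q \<Rightarrow> nat \<times> nat" where
  "block_label d S q = (SOME p. p \<in> char_index d \<and> q \<in> S (fst p) (snd p))"

lemma block_label_in_block:
  assumes "d \<ge> 1" "finite Q" "card Q = 2 * d" "dihedral_block_system d Q m S" and q: "q \<in> Q"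
  shows "block_label d S q \<in> char_index d" "q \<in> S (fst (block_label d S q)) (snd (block_label d S q))"
proof -
  have "\<exists>p. p \<in> char_index d \<and> q \<in> S (fst p) (snd p)"
    using block_system_covers[OF assms(1-4)] q by blast
  then have "block_label d S q \<in> char_index d \<and> q \<in> S (fst (block_label d S q)) (snd (block_label d S q))"
    unfolding block_label_def by (rule someI_ex)
  then show "block_label d S q \<in> char_index d" "q \<in> S (fst (block_label d S q)) (snd (block_label d S q))"
    by blast+
qed

lemma block_label_eq_iff:
  assumes "d \<ge> 1" "finite Q" "card Q = 2 * d" and blocks: "dihedral_block_system d Q m S"
    and q: "q \<in> Q" and c: "c \<in> idx d" "ga < s_idx d c"
  shows "block_label d S q = (c, ga) \<longleftrightarrow> q \<in> S c ga"
proof -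
  obtain c' ga' where label: "block_label d S q = (c', ga')" by fastforce
  have c': "c' \<in> idx d" "ga' < s_idx d c'" and "q \<in> S c' ga'"
    using block_label_in_block[OF assms(1-3) blocks q] label by auto
  moreover have "(c', ga') \<noteq> (c, ga) \<longrightarrow> S c' ga' \<inter> S c ga = {}"
    using blocks c c' unfolding dihedral_block_system_def by blast
  ultimately show ?thesis unfolding label by blast
qed

lemma block_system_imp_balanced_cover:
  assumes d: "d \<ge> 1" and fin: "finite Q" and qg: "quasigroup Q m" and cQ: "card Q = 2 * d"
    and blocks: "dihedral_block_system d Q m S"
  shows "balanced_cover_dihedral d Q m"
proof -
  define f where "f q = (case block_label d S q of (c, ga) \<Rightarrow> theta d c ga)" for q
  have sub: "S c ga \<subseteq> Q" and card: "card (S c ga) = r_idx d c ^ 2"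
    if "c \<in> idx d" "ga < s_idx d c" for c ga
    using blocks that unfolding dihedral_block_system_def by auto
  have label: "block_label d S q \<in> char_index d" if "q \<in> Q" for q
    using block_label_in_block[OF d fin cQ blocks that] by blast
  have fibre: "S c ga = {q \<in> Q. f q = theta d c ga}" if c: "c \<in> idx d" "ga < s_idx d c" for c ga
  proof -
    have "f q = theta d c ga \<longleftrightarrow> q \<in> S c ga" if q: "q \<in> Q" for q
      using label[OF q] theta_inj[OF d _ c(1) _ c(2)] block_label_eq_iff[OF d fin cQ blocks q c]
      unfolding f_def by (auto split: prod.splits)
    then show ?thesis using sub[OF c] by blast
  qed
  have range: "f ` Q = Irr d"
  proof
    show "f ` Q \<subseteq> Irr d" using label unfolding f_def Irr_def by (fastforce split: prod.splits)
    show "Irr d \<subseteq> f ` Q"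
    proof
      fix th assume "th \<in> Irr d"
      then obtain c ga where c: "c \<in> idx d" "ga < s_idx d c" and th: "th = theta d c ga"
        unfolding Irr_def by blast
      have "S c ga \<noteq> {}" using card[OF c] r_idx_pos[of d c] by auto
      then obtain q where "q \<in> S c ga" by blast
      then have "q \<in> Q" "th = f q" using fibre[OF c] th by auto
      then show "th \<in> f ` Q" by (rule rev_image_eqI)
    qed
  qed
  interpret character_labelling d Q m f S
    using d fin quasigroup_closed[OF qg] range fibre card by unfold_locales
  have "block_product_law d Q m S" using blocks unfolding dihedral_block_system_def by blast
  then show ?thesis
    unfolding balanced_cover_dihedral_def using cover_balanced_iff_block_product_law by blast
qed

theorem mainTheorem4:
  fixes d :: nat and Q :: "'q set" and m :: "'q \<Rightarrow> 'q \<Rightarrow> 'q"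
  assumes "d \<ge> 1"
    and "finite Q" and "quasigroup Q m" and "card Q = 2 * d"
  shows "balanced_cover_dihedral d Q m \<longleftrightarrow>
    (\<exists>S :: nat \<Rightarrow> nat \<Rightarrow> 'q set.
       (\<forall>a \<in> idx d. \<forall>al < s_idx d a. S a al \<subseteq> Q \<and> card (S a al) = r_idx d a ^ 2) \<and>
       (\<forall>a \<in> idx d. \<forall>al < s_idx d a. \<forall>b \<in> idx d. \<forall>be < s_idx d b.
          (a, al) \<noteq> (b, be) \<longrightarrow> S a al \<inter> S b be = {}) \<and>
       (\<forall>a \<in> idx d. \<forall>al < s_idx d a. \<forall>b \<in> idx d. \<forall>be < s_idx d b. \<forall>q \<in> Q.
          of_nat (set_prod_coeff m (S a al) (S b be) q) = rhs_coeff d S a al b be q))"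
proof -
  have "balanced_cover_dihedral d Q m \<longleftrightarrow> (\<exists>S. dihedral_block_system d Q m S)"
  proof
    assume "balanced_cover_dihedral d Q m"
    then obtain f where "is_cover d Q m f" "is_balanced Q m f (Irr d)"
      unfolding balanced_cover_dihedral_def by blast
    then show "\<exists>S. dihedral_block_system d Q m S"
      using balanced_cover_imp_block_system[OF assms(1-3)] by blast
  next
    assume "\<exists>S. dihedral_block_system d Q m S"
    then show "balanced_cover_dihedral d Q m"
      using block_system_imp_balanced_cover[OF assms] by blast
  qed
  then show ?thesis unfolding dihedral_block_system_def block_product_law_def .
qed

end
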